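(* Let $M$ be a simple-$\mathcal F$-torsion-free $R$-module. Then: (a) $M$ is a prime module; (b) $M$ is uniform; (c) $\mathrm{Ann}_R(M)\in\mathcal F^*$.
   Context: Throughout, $R$ is a commutative Noetherian local ring with maximal ideal $\mathfrak m$, and $\mathcal F$ is a Gabriel topology on $R$: a nonempty set of ideals of $R$ such that (1) if $\mathfrak a\in\mathcal F$ and $\mathfrak a\subseteq\mathfrak b$ then $\mathfrak b\in\mathcal F$; (2) if $\mathfrak a,\mathfrak b\in\mathcal F$ then $\mathfrak a\cap\mathfrak b\in\mathcal F$; (3) if $\mathfrak b$ is an ideal and there is $\mathfrak a\in\mathcal F$ with $(\mathfrak b:r)\in\mathcal F$ for all $r\in\mathfrak a$, then $\mathfrak b\in\mathcal F$. For an $R$-module $X$ and an ideal $\mathfrak a$ put $X[\mathfrak a]=\{x\in X:\mathfrak a x=0\}$. $X$ is $\mathcal F$-torsion-free if $X[\mathfrak a]=0$ for all $\mathfrak a\in\mathcal F$ (equivalently $\mathrm{Ass}(X)\cap\mathcal F=\emptyset$). $M$ is simple-$\mathcal F$-torsion-free if $M\neq 0$, $M$ is $\mathcal F$-torsion-free, and for every submodule $0\neq U\subsetneq M$ the module $M/U$ is not $\mathcal F$-torsion-free. $\mathcal F^*$ denotes the set of maximal elements (under inclusion) of $\mathrm{Spec}(R)\setminus\mathcal F$. A module $M\ne 0$ is prime if every $r\in R$ acts on $M$ either as zero or injectively (equivalently, $\mathrm{Ann}_R(M)=\mathrm{Ann}_R(U)$ for all nonzero submodules $U$). A module is uniform if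 it is nonzero and any two nonzero submodules intersect nontrivially. *)

theory Defs
  imports Complex_Main
begin

definition is_ideal :: "'a::comm_ring_1 set \<Rightarrow> bool" where
  "is_ideal I \<longleftrightarrow> 0 \<in> I \<and> (\<forall>x\<in>I. \<forall>y\<in>I. x + y \<in> I) \<and> (\<forall>r. \<forall>x\<in>I. r * x \<in> I)"

definition prime_ideal :: "'a::comm_ring_1 set \<Rightarrow> bool" where
  "prime_ideal P \<longleftrightarrow> is_ideal P \<and> P \<noteq> UNIV \<and> (\<forall>r s. r * s \<in> P \<longrightarrow> r \<in> P \<or> s \<in> P)"

definition maximal_ideal :: "'a::comm_ring_1 set \<Rightarrow> bool" where
  "maximal_ideal m \<longleftrightarrow> is_ideal m \<and> m \<noteq> UNIV \<and>
     (\<forall>J. is_ideal J \<longrightarrow> m \<subseteq> J \<longrightarrow> J = m \<or> J = UNIV)"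

definition noetherian_ring :: "'a::comm_ring_1 itself \<Rightarrow> bool" where
  "noetherian_ring _ \<longleftrightarrow>
     (\<forall>f :: nat \<Rightarrow> 'a set. (\<forall>n. is_ideal (f n)) \<longrightarrow> (\<forall>n. f n \<subseteq> f (Suc n)) \<longrightarrow>
        (\<exists>n. \<forall>m\<ge>n. f m = f n))"

definition local_ring :: "'a::comm_ring_1 itself \<Rightarrow> bool" where
  "local_ring _ \<longleftrightarrow> (\<exists>!m :: 'a set. maximal_ideal m)"

definition colon :: "'a::comm_ring_1 set \<Rightarrow> 'a \<Rightarrow> 'a set" where
  "colon b r = {s. s * r \<in> b}"

definition gabriel_topology :: "'a::comm_ring_1 set set \<Rightarrow> bool" where
  "gabriel_topology F \<longleftrightarrow>
     F \<noteq> {} \<and> (\<forall>a\<in>F. is_ideal a) \<and>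
     (\<forall>a b. a \<in> F \<longrightarrow> is_ideal b \<longrightarrow> a \<subseteq> b \<longrightarrow> b \<in> F) \<and>
     (\<forall>a\<in>F. \<forall>b\<in>F. a \<inter> b \<in> F) \<and>
     (\<forall>b. is_ideal b \<longrightarrow> (\<exists>a\<in>F. \<forall>r\<in>a. colon b r \<in> F) \<longrightarrow> b \<in> F)"

definition F_star :: "'a::comm_ring_1 set set \<Rightarrow> 'a set set" where
  "F_star F = {P. prime_ideal P \<and> P \<notin> F \<and>
      (\<forall>Q. prime_ideal Q \<longrightarrow> Q \<notin> F \<longrightarrow> P \<subseteq> Q \<longrightarrow> Q = P)}"

(* Modules: the module M is the whole type 'b with scalar multiplication scale
   (locale module from Main); submodules are module.subspace. *)

definition ann :: "('a::comm_ring_1 \<Rightarrow> 'b::ab_group_add \<Rightarrow> 'b) \<Rightarrow> 'b set \<Rightarrow> 'a set" where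
  "ann scale U = {r. \<forall>x\<in>U. scale r x = 0}"

definition F_torsion_free ::
  "'a::comm_ring_1 set set \<Rightarrow> ('a \<Rightarrow> 'b::ab_group_add \<Rightarrow> 'b) \<Rightarrow> bool" where
  "F_torsion_free F scale \<longleftrightarrow>
     (\<forall>a\<in>F. \<forall>x. (\<forall>r\<in>a. scale r x = 0) \<longrightarrow> x = 0)"

(* M/U is F-torsion-free: (M/U)[a] = 0 for all a in F, i.e. for every coset x+U,
   a(x+U) = 0 in M/U (a x \<subseteq> U) implies x+U = 0 (x \<in> U). *)
definition quot_F_torsion_free ::
  "'a::comm_ring_1 set set \<Rightarrow> ('a \<Rightarrow> 'b::ab_group_add \<Rightarrow> 'b) \<Rightarrow> 'b set \<Rightarrow> bool" where
  "quot_F_torsion_free F scale U \<longleftrightarrow>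
     (\<forall>a\<in>F. \<forall>x. (\<forall>r\<in>a. scale r x \<in> U) \<longrightarrow> x \<in> U)"

definition simple_F_torsion_free ::
  "'a::comm_ring_1 set set \<Rightarrow> ('a \<Rightarrow> 'b::ab_group_add \<Rightarrow> 'b) \<Rightarrow> bool" where
  "simple_F_torsion_free F scale \<longleftrightarrow>
     (UNIV :: 'b set) \<noteq> {0} \<and> F_torsion_free F scale \<and>
     (\<forall>U. module.subspace scale U \<longrightarrow> U \<noteq> {0} \<longrightarrow> U \<noteq> UNIV \<longrightarrow>
        \<not> quot_F_torsion_free F scale U)"

definition prime_module :: "('a::comm_ring_1 \<Rightarrow> 'b::ab_group_add \<Rightarrow> 'b) \<Rightarrow> bool" where
  "prime_module scale \<longleftrightarrow> (UNIV :: 'b set) \<noteq> {0} \<and>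
     (\<forall>r. (\<forall>x. scale r x = 0) \<or> inj (scale r))"

definition uniform_module :: "('a::comm_ring_1 \<Rightarrow> 'b::ab_group_add \<Rightarrow> 'b) \<Rightarrow> bool" where
  "uniform_module scale \<longleftrightarrow> (UNIV :: 'b set) \<noteq> {0} \<and>
     (\<forall>U V. module.subspace scale U \<longrightarrow> module.subspace scale V \<longrightarrow>
        U \<noteq> {0} \<longrightarrow> V \<noteq> {0} \<longrightarrow> U \<inter> V \<noteq> {0})"

end

theory Submission
  imports Defs
begin

text \<open>The key fact is that every nonzero submodule \<open>U\<close> of a simple-\<open>\<F>\<close>-torsion-free
module \<open>M\<close> is \<open>\<F>\<close>-dense: its \<open>\<F>\<close>-closure \<open>{x. \<exists>\<aa>\<in>\<F>. \<aa>x \<subseteq> U}\<close> is a submodule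
with \<open>\<F>\<close>-torsion-free quotient (by the third Gabriel axiom), hence all of \<open>M\<close>.
Density of the kernel of \<open>r\<close> forces \<open>r\<close> to kill \<open>M\<close> if it is not injective (a),
density of \<open>U\<close> meets every nonzero \<open>V\<close> (b), and density of \<open>Qx\<close> for a prime
\<open>Q \<notin> \<F>\<close> strictly above \<open>Ann(M)\<close> produces an element of some \<open>\<aa> \<in> \<F>\<close> outside \<open>Q\<close>
that nevertheless lies in \<open>Q\<close> (c).\<close>

lemma gabriel_topology_mono:
  assumes "gabriel_topology F" and "a \<in> F" and "is_ideal b" and "a \<subseteq> b"
  shows "b \<in> F"
proof -
  have "\<forall>a b. a \<in> F \<longrightarrow> is_ideal b \<longrightarrow> a \<subseteq> b \<longrightarrow> b \<in> F"
    using assms(1) unfolding gabriel_topology_def by (elim conjE)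
  with assms(2-4) show ?thesis by blast
qed

lemma gabriel_topology_Int: "gabriel_topology F \<Longrightarrow> a \<in> F \<Longrightarrow> b \<in> F \<Longrightarrow> a \<inter> b \<in> F"
  unfolding gabriel_topology_def by blast

lemma gabriel_topology_nonempty: "gabriel_topology F \<Longrightarrow> \<exists>a. a \<in> F"
  unfolding gabriel_topology_def by blast

lemma gabriel_topology_colon:
  assumes "gabriel_topology F" and "is_ideal b" and "a \<in> F"
    and "\<And>r. r \<in> a \<Longrightarrow> colon b r \<in> F"
  shows "b \<in> F"
proof -
  have "\<forall>b. is_ideal b \<longrightarrow> (\<exists>a\<in>F. \<forall>r\<in>a. colon b r \<in> F) \<longrightarrow> b \<in> F"
    using assms(1) unfolding gabriel_topology_def by (elim conjE)
  with assms(2-4) show ?thesis by blast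
qed

lemma is_ideal_0: "is_ideal I \<Longrightarrow> 0 \<in> I"
  unfolding is_ideal_def by blast

lemma is_ideal_add: "is_ideal I \<Longrightarrow> x \<in> I \<Longrightarrow> y \<in> I \<Longrightarrow> x + y \<in> I"
  unfolding is_ideal_def by blast

lemma is_ideal_mult_left: "is_ideal I \<Longrightarrow> x \<in> I \<Longrightarrow> r * x \<in> I"
  unfolding is_ideal_def by blast

lemma is_ideal_colon: "is_ideal b \<Longrightarrow> is_ideal (colon b r)"
  unfolding is_ideal_def colon_def by (auto simp: distrib_right mult.assoc)

lemma ideal_not_in_gabriel_topology:
  assumes "gabriel_topology F" and "is_ideal Q" and "Q \<notin> F" and "a \<in> F"
  shows "\<exists>s\<in>a. s \<notin> Q"
proof (rule ccontr)
  assume "\<not> (\<exists>s\<in>a. s \<notin> Q)"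
  then have "a \<subseteq> Q" by blast
  with gabriel_topology_mono[OF assms(1,4,2)] assms(3) show False by blast
qed

lemma simple_F_torsion_free_nontrivial:
  fixes scale :: "'a::comm_ring_1 \<Rightarrow> 'b::ab_group_add \<Rightarrow> 'b"
  shows "simple_F_torsion_free F scale \<Longrightarrow> (UNIV :: 'b set) \<noteq> {0}"
  unfolding simple_F_torsion_free_def by (elim conjE)

lemma simple_F_torsion_free_F_torsion_free:
  "simple_F_torsion_free F scale \<Longrightarrow> F_torsion_free F scale"
  unfolding simple_F_torsion_free_def by (elim conjE)

lemma simple_F_torsion_free_subspace_eq_UNIV:
  "simple_F_torsion_free F scale \<Longrightarrow> module.subspace scale U \<Longrightarrow> U \<noteq> {0} \<Longrightarrow>
    quot_F_torsion_free F scale U \<Longrightarrow> U = UNIV"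
  unfolding simple_F_torsion_free_def by blast

lemma F_torsion_free_eq_0:
  "F_torsion_free F scale \<Longrightarrow> a \<in> F \<Longrightarrow> (\<And>r. r \<in> a \<Longrightarrow> scale r x = 0) \<Longrightarrow> x = 0"
  unfolding F_torsion_free_def by blast

definition F_closure ::
  "'a::comm_ring_1 set set \<Rightarrow> ('a \<Rightarrow> 'b::ab_group_add \<Rightarrow> 'b) \<Rightarrow> 'b set \<Rightarrow> 'b set" where
  "F_closure F scale U = {x. \<exists>a\<in>F. \<forall>r\<in>a. scale r x \<in> U}"

context module
begin

lemma is_ideal_conductor: "subspace U \<Longrightarrow> is_ideal {s. scale s x \<in> U}"
  unfolding is_ideal_def
  by (simp add: scale_left_distrib subspace_0 subspace_add subspace_scale flip: scale_scale)

lemma is_ideal_ann: "is_ideal (ann scale X)"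
  unfolding ann_def is_ideal_def by (simp add: scale_left_distrib flip: scale_scale)

lemma subspace_kernel_scale: "subspace {x. scale r x = 0}"
  unfolding subspace_def
  by (auto simp: scale_right_distrib) (metis mult.commute scale_scale scale_zero_right)

lemma subspace_scale_image_ideal:
  assumes "is_ideal Q"
  shows "subspace ((\<lambda>t. scale t x) ` Q)"
  unfolding subspace_def
proof (intro conjI ballI allI)
  show "0 \<in> (\<lambda>t. scale t x) ` Q"
    using is_ideal_0[OF assms] by (metis image_eqI scale_zero_left)
next
  fix y z assume "y \<in> (\<lambda>t. scale t x) ` Q" "z \<in> (\<lambda>t. scale t x) ` Q"
  then show "y + z \<in> (\<lambda>t. scale t x) ` Q"
    using is_ideal_add[OF assms] by (force simp flip: scale_left_distrib)
next
  fix c y assume "y \<in> (\<lambda>t. scale t x) ` Q"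
  then show "scale c y \<in> (\<lambda>t. scale t x) ` Q"
    using is_ideal_mult_left[OF assms] by force
qed

lemma subset_F_closure:
  assumes "gabriel_topology F" and "subspace U"
  shows "U \<subseteq> F_closure F scale U"
proof
  fix u assume "u \<in> U"
  obtain a where "a \<in> F" using gabriel_topology_nonempty[OF assms(1)] by blast
  with \<open>u \<in> U\<close> show "u \<in> F_closure F scale U"
    unfolding F_closure_def using assms(2) subspace_scale by blast
qed

lemma subspace_F_closure:
  assumes F: "gabriel_topology F" and U: "subspace U"
  shows "subspace (F_closure F scale U)"
  unfolding subspace_def
proof (intro conjI ballI allI)
  show "0 \<in> F_closure F scale U" using subset_F_closure[OF F U] subspace_0[OF U] by blast
next
  fix x y assume "x \<in> F_closure F scale U" "y \<in> F_closure F scale U"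
  then obtain a b where "a \<in> F" "\<forall>r\<in>a. scale r x \<in> U" "b \<in> F" "\<forall>r\<in>b. scale r y \<in> U"
    unfolding F_closure_def by blast
  then have "a \<inter> b \<in> F" "\<forall>r\<in>a \<inter> b. scale r (x + y) \<in> U"
    using gabriel_topology_Int[OF F] subspace_add[OF U] by (auto simp: scale_right_distrib)
  then show "x + y \<in> F_closure F scale U" unfolding F_closure_def by blast
next
  fix c x assume "x \<in> F_closure F scale U"
  then obtain a where "a \<in> F" "\<forall>r\<in>a. scale r x \<in> U" unfolding F_closure_def by blast
  then have "\<forall>r\<in>a. scale r (scale c x) \<in> U"
    using subspace_scale[OF U, of _ c] by (metis scale_left_commute)
  with \<open>a \<in> F\<close> show "scale c x \<in> F_closure F scale U" unfolding F_closure_def by blast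
qed

lemma quot_F_torsion_free_F_closure:
  assumes F: "gabriel_topology F" and U: "subspace U"
  shows "quot_F_torsion_free F scale (F_closure F scale U)"
  unfolding quot_F_torsion_free_def
proof (intro ballI allI impI)
  fix b x assume "b \<in> F" and bx: "\<forall>r\<in>b. scale r x \<in> F_closure F scale U"
  define I where "I = {s. scale s x \<in> U}"
  have "colon I r \<in> F" if "r \<in> b" for r
  proof -
    obtain a where "a \<in> F" "\<forall>t\<in>a. scale t (scale r x) \<in> U"
      using bx \<open>r \<in> b\<close> unfolding F_closure_def by blast
    then have "a \<subseteq> colon I r" unfolding colon_def I_def by auto
    then show ?thesis
      using gabriel_topology_mono[OF F \<open>a \<in> F\<close>] is_ideal_colon is_ideal_conductor[OF U]
      unfolding I_def by blast
  qed
  then have "I \<in> F"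
    using gabriel_topology_colon[OF F _ \<open>b \<in> F\<close>] is_ideal_conductor[OF U] unfolding I_def by blast
  then show "x \<in> F_closure F scale U" unfolding F_closure_def I_def by auto
qed

lemma simple_F_torsion_free_dense:
  assumes F: "gabriel_topology F" and S: "simple_F_torsion_free F scale"
    and U: "subspace U" and "U \<noteq> {0}"
  shows "\<exists>a\<in>F. \<forall>r\<in>a. scale r x \<in> U"
proof -
  have "F_closure F scale U \<noteq> {0}"
    using subset_F_closure[OF F U] \<open>U \<noteq> {0}\<close> subspace_0[OF U] by blast
  then have "F_closure F scale U = UNIV"
    using simple_F_torsion_free_subspace_eq_UNIV[OF S subspace_F_closure[OF F U]]
      quot_F_torsion_free_F_closure[OF F U] by blast
  then show ?thesis unfolding F_closure_def by blast
qed

lemma simple_F_torsion_free_prime_module: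
  assumes F: "gabriel_topology F" and S: "simple_F_torsion_free F scale"
  shows "prime_module scale"
  unfolding prime_module_def
proof (intro conjI allI simple_F_torsion_free_nontrivial[OF S])
  fix r
  show "(\<forall>x. scale r x = 0) \<or> inj (scale r)"
  proof (rule disjCI)
    assume "\<not> inj (scale r)"
    then obtain y z where "scale r y = scale r z" "y \<noteq> z" unfolding inj_def by blast
    then have "y - z \<in> {x. scale r x = 0}" "y - z \<noteq> 0" by (auto simp: scale_right_diff_distrib)
    then have ker: "{x. scale r x = 0} \<noteq> {0}" by blast
    show "\<forall>x. scale r x = 0"
    proof
      fix x
      obtain a where "a \<in> F" "\<forall>t\<in>a. scale t (scale r x) = 0"
        using simple_F_torsion_free_dense[OF F S subspace_kernel_scale ker, of x]
        by (auto simp: mult.commute)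
      then show "scale r x = 0"
        using F_torsion_free_eq_0[OF simple_F_torsion_free_F_torsion_free[OF S]] by blast
    qed
  qed
qed

lemma simple_F_torsion_free_uniform_module:
  assumes F: "gabriel_topology F" and S: "simple_F_torsion_free F scale"
  shows "uniform_module scale"
  unfolding uniform_module_def
proof (intro conjI allI impI simple_F_torsion_free_nontrivial[OF S])
  fix U V assume U: "subspace U" and V: "subspace V" and "U \<noteq> {0}" and "V \<noteq> {0}"
  obtain x where "x \<in> V" "x \<noteq> 0" using \<open>V \<noteq> {0}\<close> subspace_0[OF V] by blast
  obtain a where "a \<in> F" and aU: "\<forall>t\<in>a. scale t x \<in> U"
    using simple_F_torsion_free_dense[OF F S U \<open>U \<noteq> {0}\<close>] by blast
  obtain r where "r \<in> a" "scale r x \<noteq> 0"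
    using F_torsion_free_eq_0[OF simple_F_torsion_free_F_torsion_free[OF S] \<open>a \<in> F\<close>]
      \<open>x \<noteq> 0\<close> by blast
  moreover have "scale r x \<in> U \<inter> V"
    using aU \<open>r \<in> a\<close> subspace_scale[OF V \<open>x \<in> V\<close>] by blast
  ultimately show "U \<inter> V \<noteq> {0}" by blast
qed

lemma prime_module_scale_eq_0_iff:
  assumes "prime_module scale" and "x \<noteq> 0"
  shows "scale r x = 0 \<longleftrightarrow> r \<in> ann scale UNIV"
proof
  assume "scale r x = 0"
  then have "\<not> inj (scale r)" using \<open>x \<noteq> 0\<close> by (metis injD scale_zero_right)
  then show "r \<in> ann scale UNIV" using assms(1) unfolding prime_module_def ann_def by blast
qed (simp add: ann_def)

lemma prime_module_prime_ideal_ann: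
  assumes P: "prime_module scale"
  shows "prime_ideal (ann scale UNIV)"
  unfolding prime_ideal_def
proof (intro conjI allI impI is_ideal_ann)
  obtain x :: 'b where "x \<noteq> 0" using P unfolding prime_module_def by blast
  show "ann scale UNIV \<noteq> UNIV"
  proof
    assume "ann scale UNIV = UNIV"
    then have "scale 1 x = 0" unfolding ann_def by blast
    with \<open>x \<noteq> 0\<close> show False by simp
  qed
next
  fix r s assume rs: "r * s \<in> ann scale UNIV"
  show "r \<in> ann scale UNIV \<or> s \<in> ann scale UNIV"
  proof (rule disjCI)
    assume "s \<notin> ann scale UNIV"
    then have "inj (scale s)" using P unfolding prime_module_def ann_def by blast
    have "scale r x = 0" for x
    proof (rule injD[OF \<open>inj (scale s)\<close>])
      show "scale s (scale r x) = scale s 0"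
        using rs unfolding ann_def by (simp add: mult.commute)
    qed
    then show "r \<in> ann scale UNIV" unfolding ann_def by blast
  qed
qed

lemma F_torsion_free_ann_not_in:
  assumes "F_torsion_free F scale" and "(UNIV :: 'b set) \<noteq> {0}"
  shows "ann scale UNIV \<notin> F"
proof
  assume "ann scale UNIV \<in> F"
  then have "x = 0" for x :: 'b
    by (rule F_torsion_free_eq_0[OF assms(1)]) (simp add: ann_def)
  with assms(2) show False by blast
qed

lemma simple_F_torsion_free_ann_maximal:
  assumes F: "gabriel_topology F" and S: "simple_F_torsion_free F scale"
    and "is_ideal Q" and "Q \<notin> F" and "ann scale UNIV \<subseteq> Q"
  shows "Q = ann scale UNIV"
proof (rule ccontr)
  assume "Q \<noteq> ann scale UNIV"
  then obtain q where "q \<in> Q" "q \<notin> ann scale UNIV" using assms(5) by blast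
  have P: "prime_module scale" by (rule simple_F_torsion_free_prime_module[OF F S])
  obtain x :: 'b where x: "x \<noteq> 0" using P unfolding prime_module_def by blast
  let ?W = "(\<lambda>t. scale t x) ` Q"
  have "scale q x \<in> ?W" "scale q x \<noteq> 0"
    using \<open>q \<in> Q\<close> \<open>q \<notin> ann scale UNIV\<close> prime_module_scale_eq_0_iff[OF P x] by auto
  then have "?W \<noteq> {0}" by blast
  then obtain a where "a \<in> F" "\<forall>r\<in>a. scale r x \<in> ?W"
    using simple_F_torsion_free_dense[OF F S subspace_scale_image_ideal[OF \<open>is_ideal Q\<close>]] by blast
  moreover obtain s where "s \<in> a" "s \<notin> Q"
    using ideal_not_in_gabriel_topology[OF F \<open>is_ideal Q\<close> \<open>Q \<notin> F\<close> \<open>a \<in> F\<close>] by blast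
  ultimately obtain t where "t \<in> Q" "scale s x = scale t x" by blast
  then have "s - t \<in> Q"
    using prime_module_scale_eq_0_iff[OF P x, of "s - t"] assms(5)
    by (auto simp: scale_left_diff_distrib)
  then have "(s - t) + t \<in> Q" using \<open>t \<in> Q\<close> is_ideal_add[OF \<open>is_ideal Q\<close>] by blast
  with \<open>s \<notin> Q\<close> show False by simp
qed

end

theorem lemma1p1:
  fixes F :: "'a::comm_ring_1 set set"
    and scale :: "'a \<Rightarrow> 'b::ab_group_add \<Rightarrow> 'b"
  assumes "noetherian_ring TYPE('a)"
    and "local_ring TYPE('a)"
    and "gabriel_topology F"
    and "module scale"
    and "simple_F_torsion_free F scale"
  shows "prime_module scale \<and> uniform_module scale \<and> ann scale UNIV \<in> F_star F"
proof -
  interpret module scale by fact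
  note simple = assms(5) and gabriel = assms(3)
  have prime: "prime_module scale"
    using simple_F_torsion_free_prime_module[OF gabriel simple] .
  have "ann scale UNIV \<in> F_star F"
    unfolding F_star_def
  proof (intro CollectI conjI allI impI)
    show "prime_ideal (ann scale UNIV)" using prime_module_prime_ideal_ann[OF prime] .
    show "ann scale UNIV \<notin> F"
      using F_torsion_free_ann_not_in simple_F_torsion_free_F_torsion_free[OF simple]
        simple_F_torsion_free_nontrivial[OF simple] by blast
    show "Q = ann scale UNIV" if "prime_ideal Q" "Q \<notin> F" "ann scale UNIV \<subseteq> Q" for Q
      using simple_F_torsion_free_ann_maximal[OF gabriel simple] that
      unfolding prime_ideal_def by blast
  qed
  then show ?thesis
    using prime simple_F_torsion_free_uniform_module[OF gabriel simple] by blast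
qed

end
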